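(* Let $G=([n],E)$ be a persistent graph and let $a<b<c$ be vertices of a 3-simplex $S\in\Xi(G)$. Then $G$ does not contain any edge $\{x,y\}$ with $a<x<b<y<c$.
   Context: A graph $G=([n],E)$ is persistent if (1) $\{i,i+1\}\in E$ for all $1\le i<n$; (2) (X-property) if $\{a,c\},\{b,d\}\in E$ for $a<b<c<d$ then $\{a,d\}\in E$; (3) (bar-property) for every edge $\{a,b\}\in E$ with $a<b-1$ there is $x$ with $a<x<b$ and $\{a,x\},\{x,b\}\in E$. For a persistent $G$, $\hat G$ is the graph on $\{0,1,\dots,n+1\}$ with edge set $E$ together with all pairs $\{0,i\}$ and $\{n+1,i\}$ ($i\in\{0,\dots,n+1\}$, $i\ne 0$ resp. $i \ne n+1$). For an edge $e=\{v,w\}\in E$ with $v<w$, let $\ell_G(e)=\max\{i : i<v,\ \{i,w\}\in E(\hat G)\}$ and $r_G(e)=\min\{i : w<i,\ \{i,v\}\in E(\hat G)\}$, and $\xi_G(e)=\{\ell_G(e),v,w,r_G(e)\}$. Then $\Xi(G)=\{\xi_G(e): e\in E\}$, a set of 4-element subsets of $\{0,\dots,n+1\}$. *)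

theory Defs
  imports Main
begin

definition graph_on :: "nat \<Rightarrow> nat set set \<Rightarrow> bool" where
  "graph_on n E \<longleftrightarrow> (\<forall>e\<in>E. \<exists>a b. e = {a, b} \<and> a \<noteq> b \<and> a \<in> {1..n} \<and> b \<in> {1..n})"

definition persistent :: "nat \<Rightarrow> nat set set \<Rightarrow> bool" where
  "persistent n E \<longleftrightarrow> graph_on n E
     \<and> (\<forall>i. 1 \<le> i \<and> i < n \<longrightarrow> {i, i + 1} \<in> E)
     \<and> (\<forall>a b c d. a < b \<and> b < c \<and> c < d \<and> {a, c} \<in> E \<and> {b, d} \<in> E \<longrightarrow> {a, d} \<in> E)
     \<and> (\<forall>a b. {a, b} \<in> E \<and> a + 1 < b \<longrightarrow> (\<exists>x. a < x \<and> x < b \<and> {a, x} \<in> E \<and> {x, b} \<in> E))"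

definition hat_edges :: "nat \<Rightarrow> nat set set \<Rightarrow> nat set set" where
  "hat_edges n E = E \<union> {{0, i} | i. i \<in> {0..n+1} \<and> i \<noteq> 0}
                     \<union> {{n + 1, i} | i. i \<in> {0..n+1} \<and> i \<noteq> n + 1}"

definition ell :: "nat \<Rightarrow> nat set set \<Rightarrow> nat \<Rightarrow> nat \<Rightarrow> nat" where
  "ell n E v w = Max {i. i < v \<and> {i, w} \<in> hat_edges n E}"

definition arr :: "nat \<Rightarrow> nat set set \<Rightarrow> nat \<Rightarrow> nat \<Rightarrow> nat" where
  "arr n E v w = Min {i. w < i \<and> {i, v} \<in> hat_edges n E}"

definition xi :: "nat \<Rightarrow> nat set set \<Rightarrow> nat \<Rightarrow> nat \<Rightarrow> nat set" where
  "xi n E v w = {ell n E v w, v, w, arr n E v w}"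

definition Xi :: "nat \<Rightarrow> nat set set \<Rightarrow> nat set set" where
  "Xi n E = {xi n E v w | v w. v < w \<and> {v, w} \<in> E}"

end

theory Submission
  imports Defs
begin

text \<open>Write the simplex as \<open>S = {l, v, w, r}\<close> with \<open>l = ell n E v w < v < w < r = arr n E v w\<close>.
  The middle vertex of any triple \<open>a < b < c\<close> in \<open>S\<close> is \<open>v\<close> or \<open>w\<close>, so it suffices to exclude
  edges \<open>{x, y}\<close> with \<open>l < x < v < y < r\<close> or \<open>l < x < w < y < r\<close>. By the choice of \<open>l\<close> and \<open>r\<close>
  no edge joins \<open>w\<close> to a vertex in \<open>(l, v)\<close> or \<open>v\<close> to a vertex in \<open>(w, r)\<close>. An edge crossing
  \<open>{v, w}\<close> would, by the X-property, produce such a forbidden edge; an edge spanning \<open>{v, w}\<close>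
  is split by the bar-property into two shorter edges, one of which is again crossing or
  spanning, so induction on the length finishes the argument.\<close>

lemma persistent_graph_on: "persistent n E \<Longrightarrow> graph_on n E"
  unfolding persistent_def by blast

lemma persistent_X:
  "\<lbrakk>persistent n E; a < b; b < c; c < d; {a, c} \<in> E; {b, d} \<in> E\<rbrakk> \<Longrightarrow> {a, d} \<in> E"
  unfolding persistent_def by blast

lemma persistent_bar:
  "\<lbrakk>persistent n E; {a, b} \<in> E; a + 1 < b\<rbrakk> \<Longrightarrow> \<exists>x. a < x \<and> x < b \<and> {a, x} \<in> E \<and> {x, b} \<in> E"
  unfolding persistent_def by blast

lemma graph_on_edge_vertex: "\<lbrakk>graph_on n E; {u, v} \<in> E\<rbrakk> \<Longrightarrow> u \<in> {1..n}"
  unfolding graph_on_def by (metis doubleton_eq_iff)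

lemma edge_in_hat_edges: "e \<in> E \<Longrightarrow> e \<in> hat_edges n E"
  unfolding hat_edges_def by blast

lemma hat_edges_vertex_le:
  assumes "graph_on n E" "{u, v} \<in> hat_edges n E"
  shows "u \<le> n + 1"
proof (cases "{u, v} \<in> E")
  case True
  then show ?thesis using graph_on_edge_vertex[OF assms(1)] by fastforce
next
  case False
  then show ?thesis using assms(2) unfolding hat_edges_def by (auto simp: doubleton_eq_iff)
qed

lemma ell_less:
  assumes "0 < v" "0 < w" "w \<le> n + 1"
  shows "ell n E v w < v"
proof -
  have "0 \<in> {i. i < v \<and> {i, w} \<in> hat_edges n E}"
    using assms unfolding hat_edges_def by auto
  then show ?thesis
    unfolding ell_def using Max_in[of "{i. i < v \<and> {i, w} \<in> hat_edges n E}"] by fastforce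
qed

lemma edge_le_ell: "\<lbrakk>{x, w} \<in> E; x < v\<rbrakk> \<Longrightarrow> x \<le> ell n E v w"
  unfolding ell_def by (rule Max_ge) (auto intro: edge_in_hat_edges)

lemma finite_arr_candidates:
  "graph_on n E \<Longrightarrow> finite {i. w < i \<and> {i, v} \<in> hat_edges n E}"
  by (rule finite_subset[of _ "{..n + 1}"]) (auto dest: hat_edges_vertex_le)

lemma arr_greater:
  assumes "graph_on n E" "v \<le> n" "w \<le> n"
  shows "w < arr n E v w"
proof -
  have "n + 1 \<in> {i. w < i \<and> {i, v} \<in> hat_edges n E}"
    using assms unfolding hat_edges_def by auto
  then show ?thesis
    unfolding arr_def using Min_in[OF finite_arr_candidates[OF assms(1)]] by fastforce
qed

lemma arr_le_edge:
  assumes "graph_on n E" "{v, y} \<in> E" "w < y"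
  shows "arr n E v w \<le> y"
  unfolding arr_def
proof (rule Min_le[OF finite_arr_candidates[OF assms(1)]])
  show "y \<in> {i. w < i \<and> {i, v} \<in> hat_edges n E}"
    using assms(2,3) by (auto simp: insert_commute intro: edge_in_hat_edges)
qed

definition edge_window :: "nat set set \<Rightarrow> nat \<Rightarrow> nat \<Rightarrow> nat \<Rightarrow> nat \<Rightarrow> bool" where
  "edge_window E l v w r \<longleftrightarrow> l < v \<and> v < w \<and> w < r \<and> {v, w} \<in> E
     \<and> (\<forall>x. l < x \<and> x < v \<longrightarrow> {x, w} \<notin> E) \<and> (\<forall>y. w < y \<and> y < r \<longrightarrow> {v, y} \<notin> E)"

lemma edge_window_ell_arr:
  assumes "graph_on n E" "{v, w} \<in> E" "v < w"
  shows "edge_window E (ell n E v w) v w (arr n E v w)"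
proof -
  have "{w, v} \<in> E" using assms(2) by (simp add: insert_commute)
  then have "v \<in> {1..n}" "w \<in> {1..n}"
    using graph_on_edge_vertex[OF assms(1)] assms(2) by blast+
  then have "ell n E v w < v" "w < arr n E v w"
    using ell_less arr_greater[OF assms(1)] by auto
  moreover have "{x, w} \<notin> E" if "ell n E v w < x" "x < v" for x
    using that edge_le_ell[of x w E v n] by (meson not_le)
  moreover have "{v, y} \<notin> E" if "w < y" "y < arr n E v w" for y
    using that arr_le_edge[OF assms(1), of v y w] by (meson not_le)
  ultimately show ?thesis
    unfolding edge_window_def using assms(2,3) by blast
qed

lemma persistent_window_no_crossing_left:
  assumes P: "persistent n E" and W: "edge_window E l v w r"
  shows "\<lbrakk>l < x; x < v; v < y; y < r\<rbrakk> \<Longrightarrow> {x, y} \<notin> E"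
proof (induction "y - x" arbitrary: x y rule: less_induct)
  case less
  have vw: "{v, w} \<in> E" "v < w"
    and no_left: "\<And>x. l < x \<Longrightarrow> x < v \<Longrightarrow> {x, w} \<notin> E"
    and no_right: "\<And>y. w < y \<Longrightarrow> y < r \<Longrightarrow> {v, y} \<notin> E"
    using W unfolding edge_window_def by blast+
  show ?case
  proof
    assume xy: "{x, y} \<in> E"
    consider "y < w" | "y = w" | "w < y" by linarith
    then show False
    proof cases
      case 1
      then have "{x, w} \<in> E" using persistent_X[OF P] less.prems xy vw by blast
      then show False using no_left less.prems by blast
    next
      case 2
      then show False using no_left less.prems xy by blast
    next
      case 3
      then obtain z where z: "x < z" "z < y" "{x, z} \<in> E" "{z, y} \<in> E"
        using persistent_bar[OF P xy] less.prems vw by fastforce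
      consider "z < v" | "z = v" | "v < z" by linarith
      then show False
      proof cases
        case 1
        have "{z, y} \<notin> E"
          by (rule less.hyps) (use z less.prems 1 in linarith)+
        then show False using z by blast
      next
        case 2
        then show False using no_right z \<open>w < y\<close> less.prems by blast
      next
        case 3
        have "{x, z} \<notin> E"
          by (rule less.hyps) (use z less.prems 3 in linarith)+
        then show False using z by blast
      qed
    qed
  qed
qed

lemma persistent_window_no_crossing_right:
  assumes P: "persistent n E" and W: "edge_window E l v w r"
    and "l < x" "x < w" "w < y" "y < r"
  shows "{x, y} \<notin> E"
proof
  assume xy: "{x, y} \<in> E"
  have vw: "{v, w} \<in> E" "v < w"
    and no_right: "\<And>y. w < y \<Longrightarrow> y < r \<Longrightarrow> {v, y} \<notin> E"
    using W unfolding edge_window_def by blast+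
  consider "x < v" | "x = v" | "v < x" by linarith
  then show False
  proof cases
    case 1
    have "v < y" using vw(2) assms(5) by linarith
    then show False
      using persistent_window_no_crossing_left[OF P W assms(3) 1 _ assms(6)] xy by blast
  next
    case 2
    then show False using no_right assms(5,6) xy by blast
  next
    case 3
    then have "{v, y} \<in> E" using persistent_X[OF P] assms(4,5) xy vw by blast
    then show False using no_right assms(5,6) by blast
  qed
qed

theorem lemma10:
  fixes n :: nat and E :: "nat set set" and S :: "nat set" and a b c :: nat
  assumes "persistent n E"
    and "S \<in> Xi n E"
    and "a \<in> S" and "b \<in> S" and "c \<in> S"
    and "a < b" and "b < c"
  shows "\<not> (\<exists>x y. {x, y} \<in> E \<and> a < x \<and> x < b \<and> b < y \<and> y < c)"
proof
  assume "\<exists>x y. {x, y} \<in> E \<and> a < x \<and> x < b \<and> b < y \<and> y < c"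
  then obtain x y where xy: "{x, y} \<in> E" "a < x" "x < b" "b < y" "y < c" by blast
  obtain v w where "S = xi n E v w" "{v, w} \<in> E" "v < w"
    using assms(2) unfolding Xi_def by auto
  moreover define l r where "l = ell n E v w" and "r = arr n E v w"
  ultimately have "S = {l, v, w, r}" and W: "edge_window E l v w r"
    using edge_window_ell_arr[OF persistent_graph_on[OF assms(1)]] unfolding xi_def by auto
  then have "l < x" "y < r" "b = v \<or> b = w"
    using assms(3-7) xy unfolding edge_window_def by auto
  then show False
    using persistent_window_no_crossing_left[OF assms(1) W]
      persistent_window_no_crossing_right[OF assms(1) W] xy
    by auto
qed

end
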